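(* Fix $R_{\rm eff}>0$ and assume that all link SNRs $\gamma^{SR}_k,\gamma^{SD}_k,\gamma^{RD}_k$, $k=1,\dots,K$, are mutually independent, and that in every slot the SNR of link $\mathsf{XY}\in\{SR,SD,RD\}$ has the truncated exponential density $f(\gamma)=c\,e^{-\gamma/\bar\gamma^{\mathsf{XY}}}$ for $\gamma\ge\gamma_{tr}$ and $0$ otherwise, with $c=e^{\gamma_{tr}/\bar\gamma^{\mathsf{XY}}}/\bar\gamma^{\mathsf{XY}}$, a common threshold $\gamma_{tr}>0$ and fixed parameters $\bar\gamma^{SR},\bar\gamma^{SD},\bar\gamma^{RD}>0$. Then: (i) without relaying, for every $K\ge1$, $\bar J^{\text{no relay}}_K(R_{\rm eff})\to\infty$ as $\gamma_{tr}\to0^+$; (ii) with relaying, for every $K\ge2$, $\bar J_K(R_{\rm eff})$ remains bounded as $\gamma_{tr}\to0^+$ (i.e. $\limsup_{\gamma_{tr}\to0^+}\bar J_K(R_{\rm eff})<\infty$).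
   Context: Notation: $I(x)=\log(1+x)$, $I^{-1}(x)=e^x-1$, $\tilde\gamma_k=\max(\gamma^{SD}_k,\gamma^{RD}_k)$. Relay problem with $K$ slots and message size $B=KR_{\rm eff}$ nats: in slot $k$ the link SNRs are $(\gamma^{SR}_k,\gamma^{SD}_k,\gamma^{RD}_k)$; a power $p_k\ge0$ is chosen causally (as a function of the SNRs of slots $1,\dots,k$). Remaining information: $b^R_1=b^D_1=B$; if $b^R_k>0$ (Phase 1, the source transmits) then $b^R_{k+1}=b^R_k-I(p_k\gamma^{SR}_k)$, $b^D_{k+1}=b^D_k-I(p_k\gamma^{SD}_k)$; if $b^R_k\le0$ (Phase 2, whichever of source/relay has the larger SNR to the destination transmits) then $b^R_{k+1}=b^R_k$, $b^D_{k+1}=b^D_k-I(p_k\tilde\gamma_k)$. The constraint is $b^D_{K+1}\le0$ a.s. The normalized minimum expected sum energy (NMESE) is $\bar J_K(R_{\rm eff})=\frac1K\mathbb{E}_{\boldsymbol\gamma_1}[J^\star(\boldsymbol\gamma_1)]$, where $J^\star(\boldsymbol\gamma_1)$ is the infimum over causal feasible policies of $\mathbb{E}[\sum_{k=1}^Kp_k\mid\boldsymbol\gamma_1]$. "No relaying" means the relay never assists, i.e. the same problem with $\gamma^{SR}_k\equiv0$ (so Phase 2 never occurs and the constraint is $\sum_k I(p_k\gamma^{SD}_k)\ge B$); its NMESE is denoted $\bar J^{\text{no relay}}_K(R_{\rm eff})$. *)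

theory Defs
  imports "HOL-Probability.Probability"
begin

type_synonym snr = "real \<times> real \<times> real"  (* (gamma_SR, gamma_SD, gamma_RD) of one slot *)

definition trexp :: "real \<Rightarrow> real \<Rightarrow> real measure" where
  "trexp tr gb = density lborel
     (\<lambda>x. ennreal (indicator {tr..} x * (exp (tr / gb) / gb) * exp (- x / gb)))"

text \<open>Remaining information after k slots: bstate B q g k = (b^R_{k+1}, b^D_{k+1}),
  where q j is the power in slot j and g j the SNR triple of slot j.\<close>
fun bstate :: "real \<Rightarrow> (nat \<Rightarrow> real) \<Rightarrow> (nat \<Rightarrow> snr) \<Rightarrow> nat \<Rightarrow> real \<times> real" where
  "bstate B q g 0 = (B, B)"
| "bstate B q g (Suc k) =
     (let (bR, bD) = bstate B q g k; (sr, sd, rd) = g (Suc k); p = q (Suc k) in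
      if bR > 0 then (bR - ln (1 + p * sr), bD - ln (1 + p * sd))
      else (bR, bD - ln (1 + p * max sd rd)))"

text \<open>A policy assigns to slot k and SNR trajectory h the power pol k h.\<close>
definition feasible :: "nat \<Rightarrow> real \<Rightarrow> (nat \<Rightarrow> (nat \<Rightarrow> snr) \<Rightarrow> real) \<Rightarrow> (nat \<Rightarrow> snr) \<Rightarrow> bool" where
  "feasible K B pol h \<longleftrightarrow> snd (bstate B (\<lambda>k. pol k h) h K) \<le> 0"

definition admissible :: "nat \<Rightarrow> (nat \<Rightarrow> (nat \<Rightarrow> snr) \<Rightarrow> real) \<Rightarrow> bool" where
  "admissible K pol \<longleftrightarrow> (\<forall>k\<in>{1..K}.
     (\<forall>h. 0 \<le> pol k h) \<and>
     (\<forall>h h'. (\<forall>j\<in>{1..k}. h j = h' j) \<longrightarrow> pol k h = pol k h') \<and>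
     pol k \<in> borel_measurable (PiM {1..K} (\<lambda>_. borel)))"

text \<open>J*(g): minimum expected sum energy given the first-slot SNRs g; slots 2..K are
  i.i.d. with law D; the constraint must hold almost surely given gamma_1 = g.\<close>
definition J_star :: "nat \<Rightarrow> real \<Rightarrow> snr measure \<Rightarrow> snr \<Rightarrow> ennreal" where
  "J_star K B D g =
     (INF pol \<in> {pol. admissible K pol \<and>
                       (AE h in PiM {2..K} (\<lambda>_. D). feasible K B pol (h(1 := g)))}.
        \<integral>\<^sup>+ h. (\<Sum>k\<in>{1..K}. ennreal (pol k (h(1 := g)))) \<partial>(PiM {2..K} (\<lambda>_. D)))"

text \<open>NMESE with K slots, rate Reff (B = K Reff), per-slot SNR law D.\<close>
definition nmese :: "nat \<Rightarrow> real \<Rightarrow> snr measure \<Rightarrow> ennreal" where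
  "nmese K Reff D = ennreal (1 / real K) * (\<integral>\<^sup>+ g. J_star K (real K * Reff) D g \<partial>D)"

definition relay_law :: "real \<Rightarrow> real \<Rightarrow> real \<Rightarrow> real \<Rightarrow> snr measure" where
  "relay_law tr gSR gSD gRD = trexp tr gSR \<Otimes>\<^sub>M (trexp tr gSD \<Otimes>\<^sub>M trexp tr gRD)"

text \<open>No relaying: the same problem with gamma_SR identically 0.\<close>
definition norelay_law :: "real \<Rightarrow> real \<Rightarrow> real \<Rightarrow> snr measure" where
  "norelay_law tr gSD gRD = return lborel 0 \<Otimes>\<^sub>M (trexp tr gSD \<Otimes>\<^sub>M trexp tr gRD)"

end

theory Submission
  imports Defs "HOL-Real_Asymp.Real_Asymp"
begin

(* (i) Without relaying gamma_SR = 0, so the relay never decodes and only the SD links matter.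
   Put V_0 = infinity and V_(n+1) = E[min (1/gamma_SD) V_n].  For any causal feasible policy the
   potential "energy spent so far + remaining information * V_(remaining slots)" does not decrease
   in expectation from slot to slot, by the elementary inequality
   b * min (1/s) V <= p + (b - ln (1 + p s)) * V.  Hence J* >= B * min (1/gamma_SD_1) V_(K-1),
   i.e. NMESE >= Reff * V_K, and every V_n tends to infinity because E[min (1/x) A] under the
   truncated exponential law grows like ln (1/tr).

   (ii) With relaying, the explicit two-slot policy that in each of slots 1 and 2 uses the power
   (e^B - 1)/max(two relevant SNRs), and power 0 afterwards, is feasible: after slot 1 either the
   destination or the relay holds the message, and slot 2 finishes the job.  Its energy is bounded
   uniformly in tr using 1/max x y <= x^(-1/2) y^(-1/2), independence of the links, and the bound
   E[x^(-1/2)] <= 1 + 2/gb for the truncated exponential law. *)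


section \<open>The truncated exponential law\<close>

definition trexp_density :: "real \<Rightarrow> real \<Rightarrow> real \<Rightarrow> real" where
  "trexp_density tr gb x = indicator {tr..} x * (exp (tr / gb) / gb) * exp (- x / gb)"

lemma trexp_density_measurable [measurable]: "trexp_density tr gb \<in> borel_measurable borel"
  unfolding trexp_density_def by measurable

lemma trexp_eq_density: "trexp tr gb = density lborel (\<lambda>x. ennreal (trexp_density tr gb x))"
  by (simp add: trexp_def trexp_density_def)

lemma sets_trexp [measurable_cong, simp]: "sets (trexp tr gb) = sets borel"
  by (simp add: trexp_def)

lemma space_trexp [simp]: "space (trexp tr gb) = UNIV"
  by (simp add: trexp_def)

lemma trexp_density_above: "tr \<le> x \<Longrightarrow> trexp_density tr gb x = exp ((tr - x) / gb) / gb"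
  by (simp add: trexp_density_def diff_divide_distrib exp_diff exp_minus field_simps)

lemma trexp_density_below: "x < tr \<Longrightarrow> trexp_density tr gb x = 0"
  by (simp add: trexp_density_def)

lemma trexp_density_le: "gb > 0 \<Longrightarrow> trexp_density tr gb x \<le> 1 / gb"
  by (cases "tr \<le> x") (auto simp: trexp_density_above trexp_density_below
                              intro!: divide_right_mono simp: divide_nonpos_pos)

lemma trexp_density_ge:
  assumes "gb > 0" "tr \<le> x" "x \<le> tr + gb"
  shows "exp (-1) / gb \<le> trexp_density tr gb x"
proof -
  have "-1 \<le> (tr - x) / gb" using assms by (simp add: field_simps)
  then have "exp (-1) \<le> exp ((tr - x) / gb)" by simp
  from divide_right_mono[OF this, of gb] show ?thesis
    using assms(1) unfolding trexp_density_above[OF assms(2)] by simp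
qed

lemma prob_space_trexp:
  assumes gb: "gb > 0"
  shows "prob_space (trexp tr gb)"
proof (rule prob_spaceI)
  define F where "F x = - exp ((tr - x) / gb)" for x
  have "(\<integral>\<^sup>+x. ennreal (exp ((tr - x) / gb) / gb) * indicator {tr..} x \<partial>lborel) = 0 - F tr"
  proof (rule nn_integral_FTC_atLeast)
    show "DERIV F x :> exp ((tr - x) / gb) / gb" for x
      unfolding F_def using gb by (auto intro!: derivative_eq_intros simp: field_simps)
    show "(F \<longlongrightarrow> 0) at_top" unfolding F_def using gb by real_asymp
  qed (use gb in auto)
  also have "(\<integral>\<^sup>+x. ennreal (exp ((tr - x) / gb) / gb) * indicator {tr..} x \<partial>lborel)
      = (\<integral>\<^sup>+x. ennreal (trexp_density tr gb x) \<partial>lborel)"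
    by (intro nn_integral_cong) (auto simp: indicator_def trexp_density_above trexp_density_below)
  finally show "emeasure (trexp tr gb) (space (trexp tr gb)) = 1"
    by (simp add: trexp_eq_density emeasure_density F_def)
qed

lemma AE_trexp_pos:
  assumes "tr > 0" shows "AE x in trexp tr gb. x > 0"
proof (rule AE_I[where N = "{..0}"])
  show "emeasure (trexp tr gb) {..0} = 0"
    using assms unfolding trexp_eq_density
    by (subst emeasure_density) (auto intro!: nn_integral_zero' simp: indicator_def trexp_density_def)
qed auto

lemma trexp_capped_inverse_ge:
  assumes tr: "0 < tr" "tr \<le> a" and a: "a < gb" and A: "ennreal (1/a) \<le> A"
  shows "ennreal ((ln gb - ln a) / (exp 1 * gb)) \<le> (\<integral>\<^sup>+x. min (ennreal (1/x)) A \<partial>trexp tr gb)"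
proof -
  have a0: "a > 0" and gb: "gb > 0" using tr a by auto
  have "ennreal ((ln gb - ln a) / (exp 1 * gb))
      = (\<integral>\<^sup>+x. ennreal (1 / (x * (exp 1 * gb))) * indicator {a..gb} x \<partial>lborel)"
  proof (subst nn_integral_FTC_Icc[where F = "\<lambda>x. ln x / (exp 1 * gb)"])
    show "DERIV (\<lambda>x. ln x / (exp 1 * gb)) x :> 1 / (x * (exp 1 * gb))" if "x \<in> {a..gb}" for x
      using that a0 by (auto intro!: derivative_eq_intros simp: field_simps)
  qed (use a a0 gb in \<open>auto simp: diff_divide_distrib\<close>)
  also have "\<dots> \<le> (\<integral>\<^sup>+x. ennreal (trexp_density tr gb x) * min (ennreal (1/x)) A \<partial>lborel)"
  proof (intro nn_integral_mono)
    fix x :: real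
    show "ennreal (1 / (x * (exp 1 * gb))) * indicator {a..gb} x
          \<le> ennreal (trexp_density tr gb x) * min (ennreal (1/x)) A"
    proof (cases "x \<in> {a..gb}")
      case True
      then have x: "a \<le> x" "x \<le> gb" "x > 0" using a0 by auto
      have "ennreal (1/x) \<le> ennreal (1/a)" using x a0 by (intro ennreal_leI) (simp add: frac_le)
      then have cap: "min (ennreal (1/x)) A = ennreal (1/x)" using A by (simp add: min_absorb1)
      have "1 / (x * (exp 1 * gb)) = exp (-1) / gb * (1/x)" by (simp add: exp_minus field_simps)
      also have "\<dots> \<le> trexp_density tr gb x * (1/x)"
        using trexp_density_ge[of gb tr x] x tr gb by (intro mult_right_mono) auto
      finally have le: "1 / (x * (exp 1 * gb)) \<le> trexp_density tr gb x * (1/x)" .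
      have "0 \<le> trexp_density tr gb x" using trexp_density_ge[of gb tr x] x tr gb
        by (intro order_trans[OF _ trexp_density_ge[of gb tr x]]) auto
      then show ?thesis using True le x by (simp add: cap ennreal_mult[symmetric] ennreal_leI)
    qed simp
  qed
  also have "\<dots> = (\<integral>\<^sup>+x. min (ennreal (1/x)) A \<partial>trexp tr gb)"
    unfolding trexp_eq_density by (subst nn_integral_density) auto
  finally show ?thesis .
qed

lemma trexp_capped_inverse_tendsto:
  assumes gb: "gb > 0" and A: "(A \<longlongrightarrow> \<infinity>) (at_right (0::real))"
  shows "((\<lambda>tr. \<integral>\<^sup>+x. min (ennreal (1/x)) (A tr) \<partial>trexp tr gb) \<longlongrightarrow> \<infinity>) (at_right 0)"
  unfolding infinity_ennreal_def tendsto_top_iff_ennreal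
proof (intro allI impI)
  fix l :: real assume l: "0 \<le> l"
  define a where "a = gb * exp (-(l + 1) * (exp 1 * gb))"
  have a0: "0 < a" using gb by (simp add: a_def)
  have "exp (-(l + 1) * (exp 1 * gb)) < 1" using gb l by (simp add: mult_neg_pos)
  then have a_less: "a < gb" using gb by (simp add: a_def)
  have a_value: "(ln gb - ln a) / (exp 1 * gb) = l + 1"
    using gb by (simp add: a_def ln_mult)
  have "eventually (\<lambda>tr. 0 < tr \<and> tr \<le> a) (at_right (0::real))"
    unfolding eventually_at_right_field using a0 by (intro exI[of _ a]) auto
  moreover have "eventually (\<lambda>tr. ennreal (1/a) < A tr) (at_right (0::real))"
    using A by (rule order_tendstoD) simp
  ultimately show "eventually (\<lambda>tr. ennreal l < (\<integral>\<^sup>+x. min (ennreal (1/x)) (A tr) \<partial>trexp tr gb)) (at_right 0)"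
  proof eventually_elim
    case (elim tr)
    have "ennreal l < ennreal (l + 1)" using l by (simp add: ennreal_lessI)
    also have "\<dots> \<le> (\<integral>\<^sup>+x. min (ennreal (1/x)) (A tr) \<partial>trexp tr gb)"
      using trexp_capped_inverse_ge[of tr a gb "A tr"] elim a_less a_value by simp
    finally show ?case .
  qed
qed

definition inv_sqrt :: "real \<Rightarrow> ennreal" where
  "inv_sqrt x = (if x > 0 then ennreal (x powr (-1/2)) else \<infinity>)"

lemma inv_sqrt_measurable [measurable]: "inv_sqrt \<in> borel_measurable borel"
  unfolding inv_sqrt_def by measurable

text \<open>Pointwise domination of the weighted inverse square root: the density handles x \<ge> 1
  and the bound 1/gb on the density handles the integrable singularity on (0,1).\<close>
lemma trexp_density_inv_sqrt_le:
  assumes tr: "tr > 0" and gb: "gb > 0"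
  shows "ennreal (trexp_density tr gb x) * inv_sqrt x
       \<le> ennreal (trexp_density tr gb x) + ennreal (1/gb) * ennreal (indicator {0..1} x * x powr (-1/2))"
proof (cases "x \<ge> tr")
  case False
  then show ?thesis by (simp add: trexp_density_below)
next
  case True
  define d where "d = trexp_density tr gb x"
  have x0: "x > 0" using True tr by simp
  have d0: "0 \<le> d" using True gb by (simp add: d_def trexp_density_above)
  have lhs: "ennreal d * inv_sqrt x = ennreal (d * x powr (-1/2))"
    using x0 d0 by (simp add: inv_sqrt_def ennreal_mult)
  show ?thesis
  proof (cases "x \<ge> 1")
    case True
    have "x powr (-1/2) \<le> 1" using True by (simp add: powr_le_one_le ge_one_powr_ge_zero
        powr_minus_divide[of x "1/2", simplified] divide_le_eq_1)
    then have "d * x powr (-1/2) \<le> d" using d0 by (simp add: mult_left_le)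
    then show ?thesis unfolding d_def[symmetric] lhs by (simp add: ennreal_leI add_increasing2)
  next
    case False
    have "d * x powr (-1/2) \<le> 1/gb * x powr (-1/2)"
      using trexp_density_le[OF gb] by (intro mult_right_mono) (auto simp: d_def)
    then have "ennreal (d * x powr (-1/2)) \<le> ennreal (1/gb) * ennreal (indicator {0..1} x * x powr (-1/2))"
      using False x0 gb by (simp add: ennreal_mult[symmetric] ennreal_leI)
    then show ?thesis unfolding d_def[symmetric] lhs by (simp add: add_increasing)
  qed
qed

lemma trexp_inv_sqrt_moment:
  assumes tr: "tr > 0" and gb: "gb > 0"
  shows "(\<integral>\<^sup>+x. inv_sqrt x \<partial>trexp tr gb) \<le> ennreal (1 + 2/gb)"
proof -
  have "(\<integral>\<^sup>+x. inv_sqrt x \<partial>trexp tr gb) = (\<integral>\<^sup>+x. ennreal (trexp_density tr gb x) * inv_sqrt x \<partial>lborel)"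
    unfolding trexp_eq_density by (subst nn_integral_density) auto
  also have "\<dots> \<le> (\<integral>\<^sup>+x. ennreal (trexp_density tr gb x)
                     + ennreal (1/gb) * ennreal (indicator {0..1} x * x powr (-1/2)) \<partial>lborel)"
    using trexp_density_inv_sqrt_le[OF tr gb] by (intro nn_integral_mono) auto
  also have "\<dots> = (\<integral>\<^sup>+x. ennreal (trexp_density tr gb x) \<partial>lborel)
                  + ennreal (1/gb) * (\<integral>\<^sup>+x. ennreal (indicator {0..1} x * x powr (-1/2)) \<partial>lborel)"
    by (subst nn_integral_add) (auto simp: nn_integral_cmult trexp_density_def)
  also have "(\<integral>\<^sup>+x. ennreal (trexp_density tr gb x) \<partial>lborel) = 1"
    using prob_space.emeasure_space_1[OF prob_space_trexp[OF gb, of tr]]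
    by (simp add: trexp_eq_density emeasure_density)
  also have "(\<integral>\<^sup>+x. ennreal (indicator {0..1} x * x powr (-1/2)) \<partial>lborel) = 2"
    using nn_integral_has_integral_lebesgue[OF _ has_integral_powr_from_0[of "-1/2" 1]] by simp
  also have "1 + ennreal (1/gb) * 2 = ennreal (1 + 2/gb)"
    using gb ennreal_mult[of "1/gb" 2] by (simp add: ennreal_plus[symmetric])
  finally show ?thesis .
qed


section \<open>Integrals over product measures\<close>

lemma nn_integral_pair_product:
  fixes F :: "'a \<Rightarrow> ennreal" and G :: "'b \<Rightarrow> ennreal"
  assumes N: "sigma_finite_measure N"
    and [measurable]: "F \<in> borel_measurable M" "G \<in> borel_measurable N"
  shows "(\<integral>\<^sup>+z. F (fst z) * G (snd z) \<partial>(M \<Otimes>\<^sub>M N)) = (\<integral>\<^sup>+x. F x \<partial>M) * (\<integral>\<^sup>+y. G y \<partial>N)"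
proof -
  interpret N: sigma_finite_measure N by fact
  have "(\<integral>\<^sup>+z. F (fst z) * G (snd z) \<partial>(M \<Otimes>\<^sub>M N)) = (\<integral>\<^sup>+x. \<integral>\<^sup>+y. F x * G y \<partial>N \<partial>M)"
    by (subst N.nn_integral_fst[symmetric]) auto
  also have "\<dots> = (\<integral>\<^sup>+x. F x * (\<integral>\<^sup>+y. G y \<partial>N) \<partial>M)"
    by (simp add: nn_integral_cmult)
  finally show ?thesis by (simp add: nn_integral_multc)
qed

lemma nn_integral_pair_fst:
  fixes F :: "'a \<Rightarrow> ennreal"
  assumes "prob_space N" and "F \<in> borel_measurable M"
  shows "(\<integral>\<^sup>+z. F (fst z) \<partial>(M \<Otimes>\<^sub>M N)) = (\<integral>\<^sup>+x. F x \<partial>M)"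
  using nn_integral_pair_product[of N F M "\<lambda>_. 1"] assms
  by (simp add: prob_space_imp_sigma_finite prob_space.emeasure_space_1)

lemma nn_integral_pair_snd:
  fixes G :: "'b \<Rightarrow> ennreal"
  assumes "prob_space M" "sigma_finite_measure N" "G \<in> borel_measurable N"
  shows "(\<integral>\<^sup>+z. G (snd z) \<partial>(M \<Otimes>\<^sub>M N)) = (\<integral>\<^sup>+y. G y \<partial>N)"
  using nn_integral_pair_product[of N "\<lambda>_. 1" M G] assms
  by (simp add: prob_space.emeasure_space_1)

lemma nn_integral_triple_mid:
  fixes f :: "'b \<Rightarrow> ennreal"
  assumes P1: "prob_space M1" and P2: "prob_space M2" and P3: "prob_space M3"
    and f [measurable]: "f \<in> borel_measurable M2"
  shows "(\<integral>\<^sup>+y. f (fst (snd y)) \<partial>(M1 \<Otimes>\<^sub>M (M2 \<Otimes>\<^sub>M M3))) = (\<integral>\<^sup>+x. f x \<partial>M2)"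
proof -
  have "prob_space (M2 \<Otimes>\<^sub>M M3)" using P2 P3 by (rule prob_space_pair)
  then have "(\<integral>\<^sup>+y. f (fst (snd y)) \<partial>(M1 \<Otimes>\<^sub>M (M2 \<Otimes>\<^sub>M M3))) = (\<integral>\<^sup>+w. f (fst w) \<partial>(M2 \<Otimes>\<^sub>M M3))"
    using P1 by (intro nn_integral_pair_snd[where G = "\<lambda>w. f (fst w)"] prob_space_imp_sigma_finite) auto
  also have "\<dots> = (\<integral>\<^sup>+x. f x \<partial>M2)"
    using P3 by (rule nn_integral_pair_fst) simp
  finally show ?thesis .
qed

lemma AE_pair_fstI:
  assumes "sigma_finite_measure M" "sigma_finite_measure N"
    and "AE x in M. P x" and [measurable]: "Measurable.pred M P"
  shows "AE z in M \<Otimes>\<^sub>M N. P (fst z)"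
proof -
  interpret pair_sigma_finite M N using assms(1,2) by (simp add: pair_sigma_finite_def)
  show ?thesis by (rule AE_pair_measure) (use assms(3) in \<open>auto elim: AE_mp\<close>)
qed

lemma AE_pair_sndI:
  assumes "sigma_finite_measure M" "sigma_finite_measure N"
    and "AE y in N. P y" and [measurable]: "Measurable.pred N P"
  shows "AE z in M \<Otimes>\<^sub>M N. P (snd z)"
proof -
  interpret pair_sigma_finite M N using assms(1,2) by (simp add: pair_sigma_finite_def)
  show ?thesis by (rule AE_pair_measure) (use assms(3) in \<open>auto intro: AE_I2\<close>)
qed

lemma borel_snr: "(borel \<Otimes>\<^sub>M (borel \<Otimes>\<^sub>M borel)) = (borel :: snr measure)"
  by (simp add: borel_prod)


section \<open>Dynamics of the remaining information\<close>

lemma bstate_Suc_sel: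
  "bstate B q g (Suc k) = (let S = bstate B q g k in
     if fst S > 0
     then (fst S - ln (1 + q (Suc k) * fst (g (Suc k))), snd S - ln (1 + q (Suc k) * fst (snd (g (Suc k)))))
     else (fst S, snd S - ln (1 + q (Suc k) * max (fst (snd (g (Suc k)))) (snd (snd (g (Suc k)))))))"
  by (simp add: Let_def split: prod.split)

lemma bstate_cong:
  assumes "\<And>k. k \<in> {1..n} \<Longrightarrow> q k = q' k" "\<And>k. k \<in> {1..n} \<Longrightarrow> g k = g' k"
  shows "bstate B q g n = bstate B q' g' n"
  using assms
proof (induction n)
  case (Suc n)
  then have "bstate B q g n = bstate B q' g' n" "q (Suc n) = q' (Suc n)" "g (Suc n) = g' (Suc n)"
    by auto
  then show ?case by (simp only: bstate_Suc_sel)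
qed simp

lemma bstate_zero_power: "q (Suc k) = 0 \<Longrightarrow> snd (bstate B q g (Suc k)) = snd (bstate B q g k)"
  by (simp split: prod.split)

lemma bstate_silent:
  assumes silent: "\<And>k. n < k \<Longrightarrow> q k = 0" and "n \<le> m"
  shows "snd (bstate B q g m) = snd (bstate B q g n)"
  using assms(2)
proof (induction m rule: dec_induct)
  case (step m)
  have "q (Suc m) = 0" using step silent by simp
  from trans[OF bstate_zero_power[of q m B g, OF this] step.IH] show ?case .
qed simp

lemma bstate_measurable:
  assumes "\<And>k. k \<in> {1..n} \<Longrightarrow> (\<lambda>h. G h k) \<in> measurable M (borel \<Otimes>\<^sub>M (borel \<Otimes>\<^sub>M borel))"
    and "\<And>k. k \<in> {1..n} \<Longrightarrow> (\<lambda>h. Q h k) \<in> borel_measurable M"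
  shows "(\<lambda>h. fst (bstate B (Q h) (G h) n)) \<in> borel_measurable M \<and>
         (\<lambda>h. snd (bstate B (Q h) (G h) n)) \<in> borel_measurable M"
  using assms
proof (induction n)
  case (Suc n)
  note [measurable] = Suc.IH[OF Suc.prems, THEN conjunct1] Suc.IH[OF Suc.prems, THEN conjunct2]
  have [measurable]: "(\<lambda>h. G h (Suc n)) \<in> measurable M (borel \<Otimes>\<^sub>M (borel \<Otimes>\<^sub>M borel))"
    "(\<lambda>h. Q h (Suc n)) \<in> borel_measurable M" using Suc.prems by auto
  show ?case unfolding bstate_Suc_sel Let_def by (auto simp del: bstate.simps)
qed simp

lemma measurable_fix_first_slot:
  fixes m K :: nat and g :: snr
  assumes D: "sets D = sets (borel \<Otimes>\<^sub>M (borel \<Otimes>\<^sub>M borel))" and m: "m \<le> K" and K: "1 \<le> K"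
  shows "(\<lambda>h. h(1 := g)) \<in> measurable (PiM {2..m} (\<lambda>_. D)) (PiM {1..K} (\<lambda>_. borel))"
proof -
  let ?f = "\<lambda>i h. if i = (1::nat) then g else if i \<in> {2..m} then h i else undefined"
  have "(\<lambda>h i. ?f i h) \<in> measurable (PiM {2..m} (\<lambda>_. D)) (PiM {1..K} (\<lambda>_. borel))"
  proof (rule measurable_PiM_single')
    fix i :: nat
    show "?f i \<in> measurable (PiM {2..m} (\<lambda>_. D)) borel"
    proof (cases "i \<in> {2..m}")
      case True
      then have "?f i = (\<lambda>h. h i)" by auto
      then show ?thesis
        using measurable_component_singleton[OF True, of "\<lambda>_. D"] D borel_snr
        by (metis measurable_cong_sets)
    next
      case False
      then have "?f i = (\<lambda>h. if i = 1 then g else undefined)" by auto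
      then show ?thesis by simp
    qed
  qed (use m K in \<open>auto simp: PiE_def extensional_def\<close>)
  moreover have "h(1 := g) = (\<lambda>i. ?f i h)" if "h \<in> space (PiM {2..m} (\<lambda>_. D))" for h
    using that by (auto simp: space_PiM PiE_def extensional_def fun_eq_iff)
  ultimately show ?thesis by (rule measurable_cong[THEN iffD2, rotated]) simp
qed


section \<open>Part (i): without relaying the energy blows up\<close>

text \<open>One-slot inequality behind the dynamic-programming bound: spending power p on a link of
  SNR s removes ln (1 + p s) \<le> p s nats, so b min (1/s) V is at most p plus the cost-to-go V
  of the information that remains.\<close>
lemma energy_step_bound:
  fixes V :: ennreal
  assumes p: "p \<ge> 0"
  shows "ennreal b * min (ennreal (1/s)) V \<le> ennreal p + ennreal (b - ln (1 + p * s)) * V"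
proof (cases "s > 0 \<and> b > 0")
  case False
  then have "ennreal b * min (ennreal (1/s)) V = 0" by (auto simp: ennreal_neg min_def)
  then show ?thesis by (metis zero_le)
next
  case True
  then have s: "s > 0" and b: "b > 0" by auto
  define x where "x = ln (1 + p * s)"
  have x0: "x \<ge> 0" using p s by (simp add: x_def)
  have "x \<le> p * s" unfolding x_def using p s by (intro ln_add_one_self_le_self) simp
  then have px: "x / s \<le> p" using s by (simp add: divide_le_eq mult.commute)
  let ?m = "min (ennreal (1/s)) V"
  show ?thesis
  proof (cases "x \<ge> b")
    case True
    have "ennreal b * ?m \<le> ennreal b * ennreal (1/s)" by (intro mult_left_mono) auto
    also have "\<dots> = ennreal (b / s)" using b s by (simp add: ennreal_mult'' divide_inverse)
    also have "\<dots> \<le> ennreal p" using True px s by (intro ennreal_leI) (simp add: divide_right_mono order_trans[of _ "x/s"])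
    finally show ?thesis by (simp add: add_increasing2 order_trans)
  next
    case False
    have "ennreal b = ennreal x + ennreal (b - x)" using x0 False by (simp add: ennreal_plus[symmetric])
    then have "ennreal b * ?m = ennreal x * ?m + ennreal (b - x) * ?m" by (simp add: distrib_right)
    also have "ennreal x * ?m \<le> ennreal x * ennreal (1/s)" by (intro mult_left_mono) auto
    also have "ennreal x * ennreal (1/s) = ennreal (x/s)" using x0 s by (simp add: ennreal_mult'' divide_inverse)
    also have "\<dots> \<le> ennreal p" using px by (intro ennreal_leI)
    also have "ennreal (b - x) * ?m \<le> ennreal (b - x) * V" by (intro mult_left_mono) auto
    finally show ?thesis by (simp add: x_def add_mono)
  qed
qed

text \<open>Cost-to-go per nat of information with n slots left when only the SD link can help:
  V_0 = \<infinity> and V_(n+1) = E[min (1/gamma_SD) V_n].\<close>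
fun dp_value :: "snr measure \<Rightarrow> nat \<Rightarrow> ennreal" where
  "dp_value D 0 = \<infinity>"
| "dp_value D (Suc n) = (\<integral>\<^sup>+y. min (ennreal (1 / fst (snd y))) (dp_value D n) \<partial>D)"

definition run_state :: "real \<Rightarrow> (nat \<Rightarrow> (nat \<Rightarrow> snr) \<Rightarrow> real) \<Rightarrow> snr \<Rightarrow> (nat \<Rightarrow> snr) \<Rightarrow> nat \<Rightarrow> real \<times> real" where
  "run_state B pol g h n = bstate B (\<lambda>k. pol k (h(1 := g))) (h(1 := g)) n"

definition potential ::
    "snr measure \<Rightarrow> nat \<Rightarrow> real \<Rightarrow> (nat \<Rightarrow> (nat \<Rightarrow> snr) \<Rightarrow> real) \<Rightarrow> snr \<Rightarrow> nat \<Rightarrow> (nat \<Rightarrow> snr) \<Rightarrow> ennreal" where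
  "potential D K B pol g n h = (\<Sum>k\<in>{1..n}. ennreal (pol k (h(1 := g)))) +
     (if fst (run_state B pol g h n) > 0
      then ennreal (snd (run_state B pol g h n)) * dp_value D (K - n) else 0)"

lemma admissible_nonneg: "admissible K pol \<Longrightarrow> k \<in> {1..K} \<Longrightarrow> 0 \<le> pol k h"
  by (simp add: admissible_def)

lemma admissible_causal:
  "admissible K pol \<Longrightarrow> k \<in> {1..K} \<Longrightarrow> (\<forall>j\<in>{1..k}. h j = h' j) \<Longrightarrow> pol k h = pol k h'"
  by (simp add: admissible_def)

lemma admissible_measurable:
  "admissible K pol \<Longrightarrow> k \<in> {1..K} \<Longrightarrow> pol k \<in> borel_measurable (PiM {1..K} (\<lambda>_. borel))"
  by (simp add: admissible_def)

context
  fixes D :: "snr measure" and K :: nat and B :: real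
    and pol :: "nat \<Rightarrow> (nat \<Rightarrow> snr) \<Rightarrow> real" and g :: snr
  assumes D_prob: "prob_space D" and D_sets: "sets D = sets (borel \<Otimes>\<^sub>M (borel \<Otimes>\<^sub>M borel))"
    and D_no_relay: "AE y in D. fst y = 0"
    and adm: "admissible K pol" and K_pos: "1 \<le> K"
begin

lemma potential_measurable:
  assumes n: "n \<le> K"
  shows "potential D K B pol g n \<in> borel_measurable (PiM {2..n} (\<lambda>_. D))"
proof -
  have fix_first: "(\<lambda>h. h(1 := g)) \<in> measurable (PiM {2..n} (\<lambda>_. D)) (PiM {1..K} (\<lambda>_. borel))"
    using D_sets n K_pos by (rule measurable_fix_first_slot)
  have power [measurable]: "(\<lambda>h. pol k (h(1 := g))) \<in> borel_measurable (PiM {2..n} (\<lambda>_. D))"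
    if "k \<in> {1..n}" for k
    using measurable_comp[OF fix_first admissible_measurable[OF adm, of k]] that n by (simp add: comp_def)
  have slot: "(\<lambda>h. (h(1 := g)) k) \<in> measurable (PiM {2..n} (\<lambda>_. D)) (borel \<Otimes>\<^sub>M (borel \<Otimes>\<^sub>M borel))"
    if "k \<in> {1..n}" for k
  proof -
    have "(\<lambda>x. x k) \<in> measurable (PiM {1..K} (\<lambda>_. borel)) (borel :: snr measure)"
      using that n by (intro measurable_component_singleton) auto
    from measurable_comp[OF fix_first this] show ?thesis by (simp add: comp_def borel_snr)
  qed
  have "(\<lambda>h. fst (run_state B pol g h n)) \<in> borel_measurable (PiM {2..n} (\<lambda>_. D)) \<and>
        (\<lambda>h. snd (run_state B pol g h n)) \<in> borel_measurable (PiM {2..n} (\<lambda>_. D))"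
    unfolding run_state_def by (intro bstate_measurable slot power)
  note [measurable] = this[THEN conjunct1] this[THEN conjunct2]
  show ?thesis unfolding potential_def[abs_def] by measurable
qed

lemma policy_update_later:
  "k \<in> {1..n} \<Longrightarrow> n < K \<Longrightarrow> pol k ((x(Suc n := y))(1 := g)) = pol k (x(1 := g))"
  by (intro admissible_causal[OF adm]) auto

lemma run_state_update_later:
  "n < K \<Longrightarrow> run_state B pol g (x(Suc n := y)) n = run_state B pol g x n"
  unfolding run_state_def by (intro bstate_cong policy_update_later) auto

lemma potential_Suc_ge:
  fixes x :: "nat \<Rightarrow> snr" and y :: snr
  assumes n: "1 \<le> n" "n < K" and y: "fst y = 0"
  defines "S \<equiv> run_state B pol g x n"
  shows "(\<Sum>k\<in>{1..n}. ennreal (pol k (x(1 := g)))) +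
           (if fst S > 0 then ennreal (snd S) * min (ennreal (1 / fst (snd y))) (dp_value D (K - Suc n)) else 0)
         \<le> potential D K B pol g (Suc n) (x(Suc n := y))"
    (is "?c + ?G \<le> _")
proof -
  define p where "p = pol (Suc n) ((x(Suc n := y))(1 := g))"
  have p: "0 \<le> p" using n by (auto simp: p_def intro: admissible_nonneg[OF adm])
  have "(\<Sum>k\<in>{1..n}. ennreal (pol k ((x(Suc n := y))(1 := g)))) = ?c"
    using n by (intro sum.cong refl arg_cong[where f = ennreal] policy_update_later) auto
  then have sum: "(\<Sum>k\<in>{1..Suc n}. ennreal (pol k ((x(Suc n := y))(1 := g)))) = ?c + ennreal p"
    by (simp add: sum.cl_ivl_Suc p_def)
  have last: "((x(Suc n := y))(1 := g)) (Suc n) = y" using n by simp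
  have S_next: "run_state B pol g (x(Suc n := y)) (Suc n) =
     (if fst S > 0 then (fst S - ln (1 + p * fst y), snd S - ln (1 + p * fst (snd y)))
      else (fst S, snd S - ln (1 + p * max (fst (snd y)) (snd (snd y)))))"
    using run_state_update_later[OF n(2), of x y] last
    unfolding S_def run_state_def p_def by (simp only: bstate_Suc_sel Let_def)
  show ?thesis
  proof (cases "fst S > 0")
    case True
    have "?G \<le> ennreal p + ennreal (snd S - ln (1 + p * fst (snd y))) * dp_value D (K - Suc n)"
      using True p by (simp add: energy_step_bound)
    then have "?c + ?G \<le> ?c + ennreal p + ennreal (snd S - ln (1 + p * fst (snd y))) * dp_value D (K - Suc n)"
      by (simp add: add.assoc add_left_mono)
    also have "\<dots> = potential D K B pol g (Suc n) (x(Suc n := y))"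
      unfolding potential_def sum S_next using True y by simp
    finally show ?thesis .
  next
    case False
    then have "?c + ?G = ?c" by simp
    also have "\<dots> \<le> potential D K B pol g (Suc n) (x(Suc n := y))"
      unfolding potential_def sum by (simp add: add_increasing2 order_trans[OF _ add_increasing2])
    finally show ?thesis .
  qed
qed

lemma potential_le_expected_next:
  assumes n: "1 \<le> n" "n < K"
  shows "potential D K B pol g n x \<le> (\<integral>\<^sup>+y. potential D K B pol g (Suc n) (x(Suc n := y)) \<partial>D)"
proof -
  interpret D: prob_space D by (rule D_prob)
  define S where "S = run_state B pol g x n"
  define c where "c = (\<Sum>k\<in>{1..n}. ennreal (pol k (x(1 := g))))"
  define G where "G y = (if fst S > 0
      then ennreal (snd S) * min (ennreal (1 / fst (snd y))) (dp_value D (K - Suc n)) else 0)" for y :: snr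
  have G_measurable: "G \<in> borel_measurable D"
    unfolding G_def[abs_def] using D_sets by (simp cong: measurable_cong_sets)
  have K_n: "K - n = Suc (K - Suc n)" using n by simp
  have "potential D K B pol g n x = c + (\<integral>\<^sup>+y. G y \<partial>D)"
    unfolding potential_def K_n G_def c_def S_def using D_sets
    by (auto simp: nn_integral_cmult cong: measurable_cong_sets)
  also have "\<dots> = (\<integral>\<^sup>+y. c + G y \<partial>D)"
    using G_measurable by (simp add: nn_integral_add D.emeasure_space_1)
  also have "\<dots> \<le> (\<integral>\<^sup>+y. potential D K B pol g (Suc n) (x(Suc n := y)) \<partial>D)"
  proof (rule nn_integral_mono_AE)
    show "AE y in D. c + G y \<le> potential D K B pol g (Suc n) (x(Suc n := y))"
      using D_no_relay by eventually_elim (unfold c_def G_def S_def, rule potential_Suc_ge[OF n])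
  qed
  finally show ?thesis .
qed

lemma potential_integral_mono:
  assumes n: "1 \<le> n" "n < K"
  shows "integral\<^sup>N (PiM {2..n} (\<lambda>_. D)) (potential D K B pol g n)
       \<le> integral\<^sup>N (PiM {2..Suc n} (\<lambda>_. D)) (potential D K B pol g (Suc n))"
proof -
  interpret D: prob_space D by (rule D_prob)
  interpret P: product_sigma_finite "\<lambda>_. D" by unfold_locales
  have insert: "{2..Suc n} = insert (Suc n) {2..n}" using n by auto
  have "integral\<^sup>N (PiM {2..Suc n} (\<lambda>_. D)) (potential D K B pol g (Suc n)) =
      (\<integral>\<^sup>+x. (\<integral>\<^sup>+y. potential D K B pol g (Suc n) (x(Suc n := y)) \<partial>D) \<partial>PiM {2..n} (\<lambda>_. D))"
    unfolding insert using potential_measurable[of "Suc n"] n insert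
    by (intro P.product_nn_integral_insert) auto
  then show ?thesis
    using potential_le_expected_next[OF n] by (simp add: nn_integral_mono)
qed

lemma potential_integral_chain:
  "1 \<le> n \<Longrightarrow> n \<le> K \<Longrightarrow> integral\<^sup>N (PiM {2..1} (\<lambda>_. D)) (potential D K B pol g 1)
       \<le> integral\<^sup>N (PiM {2..n} (\<lambda>_. D)) (potential D K B pol g n)"
proof (induction n)
  case (Suc n)
  then show ?case
    by (cases "n = 0") (auto intro: order_trans[OF _ potential_integral_mono])
qed simp

lemma policy_energy_ge:
  assumes B: "B > 0" and g: "fst g = 0"
    and feas: "AE h in PiM {2..K} (\<lambda>_. D). feasible K B pol (h(1 := g))"
  shows "ennreal B * min (ennreal (1 / fst (snd g))) (dp_value D (K - 1))
     \<le> (\<integral>\<^sup>+h. (\<Sum>k\<in>{1..K}. ennreal (pol k (h(1 := g)))) \<partial>PiM {2..K} (\<lambda>_. D))"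
proof -
  define p where "p = pol 1 ((\<lambda>_. undefined)(1 := g))"
  have p: "0 \<le> p" unfolding p_def using K_pos by (intro admissible_nonneg[OF adm]) auto
  have state_1: "run_state B pol g (\<lambda>_. undefined) 1 = (B, B - ln (1 + p * fst (snd g)))"
    unfolding run_state_def p_def using B g by (cases g) (simp add: Let_def)
  have "ennreal B * min (ennreal (1 / fst (snd g))) (dp_value D (K - 1))
      \<le> potential D K B pol g 1 (\<lambda>_. undefined)"
    using energy_step_bound[OF p] B unfolding potential_def state_1 p_def by simp
  also have "\<dots> = integral\<^sup>N (PiM {2..1} (\<lambda>_. D)) (potential D K B pol g 1)"
    by (simp add: PiM_empty nn_integral_count_space_finite)
  also have "\<dots> \<le> integral\<^sup>N (PiM {2..K} (\<lambda>_. D)) (potential D K B pol g K)"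
    using K_pos by (rule potential_integral_chain) simp
  also have "\<dots> \<le> (\<integral>\<^sup>+h. (\<Sum>k\<in>{1..K}. ennreal (pol k (h(1 := g)))) \<partial>PiM {2..K} (\<lambda>_. D))"
    using feas by (intro nn_integral_mono_AE)
      (auto simp: potential_def feasible_def run_state_def ennreal_neg elim!: AE_mp)
  finally show ?thesis .
qed

end

lemma nmese_no_relay_ge:
  assumes D_prob: "prob_space D" and D_sets: "sets D = sets (borel \<Otimes>\<^sub>M (borel \<Otimes>\<^sub>M borel))"
    and D_no_relay: "AE y in D. fst y = 0" and Reff: "Reff > 0" and K: "1 \<le> K"
  shows "ennreal Reff * dp_value D K \<le> nmese K Reff D"
proof -
  define B where "B = real K * Reff"
  have B: "B > 0" using K Reff by (simp add: B_def)
  have J_ge: "ennreal B * min (ennreal (1 / fst (snd g))) (dp_value D (K - 1)) \<le> J_star K B D g"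
    if "fst g = 0" for g
    unfolding J_star_def
  proof (rule INF_greatest)
    fix pol assume "pol \<in> {pol. admissible K pol \<and> (AE h in PiM {2..K} (\<lambda>_. D). feasible K B pol (h(1 := g)))}"
    then show "ennreal B * min (ennreal (1 / fst (snd g))) (dp_value D (K - 1))
        \<le> (\<integral>\<^sup>+h. (\<Sum>k\<in>{1..K}. ennreal (pol k (h(1 := g)))) \<partial>PiM {2..K} (\<lambda>_. D))"
      using policy_energy_ge[OF D_prob D_sets D_no_relay _ K B that] by blast
  qed
  have "ennreal B * dp_value D K = (\<integral>\<^sup>+g. ennreal B * min (ennreal (1 / fst (snd g))) (dp_value D (K - 1)) \<partial>D)"
    using K D_sets by (cases K) (auto simp: nn_integral_cmult cong: measurable_cong_sets)
  also have "\<dots> \<le> (\<integral>\<^sup>+g. J_star K B D g \<partial>D)"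
    using D_no_relay J_ge by (intro nn_integral_mono_AE) (auto elim: AE_mp)
  finally have "ennreal (1 / real K) * (ennreal B * dp_value D K) \<le> nmese K Reff D"
    unfolding nmese_def B_def by (intro mult_left_mono) auto
  moreover have "ennreal (1 / real K) * (ennreal B * dp_value D K) = ennreal Reff * dp_value D K"
    using K Reff by (simp add: B_def mult.assoc[symmetric] ennreal_mult[symmetric])
  ultimately show ?thesis by simp
qed

lemma sets_norelay: "sets (norelay_law tr gSD gRD) = sets (borel \<Otimes>\<^sub>M (borel \<Otimes>\<^sub>M borel))"
  unfolding norelay_law_def by (intro sets_pair_measure_cong) auto

lemma prob_space_norelay: "gSD > 0 \<Longrightarrow> gRD > 0 \<Longrightarrow> prob_space (norelay_law tr gSD gRD)"
  unfolding norelay_law_def by (intro prob_space_pair prob_space_return prob_space_trexp) auto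

lemma AE_norelay_dead:
  assumes "gSD > 0" "gRD > 0"
  shows "AE y in norelay_law tr gSD gRD. fst y = 0"
  unfolding norelay_law_def using assms
  by (intro AE_pair_fstI prob_space_imp_sigma_finite prob_space_return prob_space_pair prob_space_trexp)
     (auto simp: AE_return)

lemma dp_value_norelay:
  assumes "gSD > 0" "gRD > 0"
  shows "dp_value (norelay_law tr gSD gRD) (Suc n)
     = (\<integral>\<^sup>+x. min (ennreal (1/x)) (dp_value (norelay_law tr gSD gRD) n) \<partial>trexp tr gSD)"
  unfolding dp_value.simps
  by (subst (1) norelay_law_def, rule nn_integral_triple_mid)
     (use assms in \<open>auto intro: prob_space_return prob_space_trexp\<close>)

lemma dp_value_norelay_tendsto:
  assumes "gSD > 0" "gRD > 0"
  shows "((\<lambda>tr. dp_value (norelay_law tr gSD gRD) (Suc n)) \<longlongrightarrow> \<infinity>) (at_right 0)"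
proof (induction n)
  case 0
  show ?case unfolding dp_value_norelay[OF assms]
    by (rule trexp_capped_inverse_tendsto) (use assms in auto)
next
  case (Suc n)
  show ?case unfolding dp_value_norelay[OF assms, of _ "Suc n"]
    by (rule trexp_capped_inverse_tendsto) (use assms Suc in auto)
qed

lemma nmese_norelay_tendsto:
  assumes Reff: "Reff > 0" and gSD: "gSD > 0" and gRD: "gRD > 0" and K: "K \<ge> 1"
  shows "((\<lambda>tr. nmese K Reff (norelay_law tr gSD gRD)) \<longlongrightarrow> \<infinity>) (at_right 0)"
proof (rule tendsto_sandwich)
  have "((\<lambda>tr. ennreal Reff * dp_value (norelay_law tr gSD gRD) (Suc (K - 1))) \<longlongrightarrow> ennreal Reff * \<infinity>) (at_right 0)"
    using gSD gRD by (intro ennreal_tendsto_cmult dp_value_norelay_tendsto) simp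
  then show "((\<lambda>tr. ennreal Reff * dp_value (norelay_law tr gSD gRD) K) \<longlongrightarrow> \<infinity>) (at_right 0)"
    using K Reff by simp
  show "eventually (\<lambda>tr. ennreal Reff * dp_value (norelay_law tr gSD gRD) K
                      \<le> nmese K Reff (norelay_law tr gSD gRD)) (at_right 0)"
    using assms by (intro always_eventually allI nmese_no_relay_ge prob_space_norelay sets_norelay AE_norelay_dead)
qed auto


section \<open>Part (ii): with relaying the energy stays bounded\<close>

text \<open>The power with which a link of SNR x delivers all B nats in one slot.\<close>
definition relay_power :: "real \<Rightarrow> real \<Rightarrow> real" where
  "relay_power B x = (if x > 0 then (exp B - 1) / x else 0)"

lemma relay_power_measurable [measurable]: "relay_power B \<in> borel_measurable borel"
  unfolding relay_power_def by measurable

lemma relay_power_nonneg: "B \<ge> 0 \<Longrightarrow> relay_power B x \<ge> 0"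
  by (simp add: relay_power_def)

lemma relay_power_delivers: "x > 0 \<Longrightarrow> ln (1 + relay_power B x * x) = B"
  by (simp add: relay_power_def)

definition two_slot_policy :: "real \<Rightarrow> nat \<Rightarrow> (nat \<Rightarrow> snr) \<Rightarrow> real" where
  "two_slot_policy B k h =
     (if k = 1 then relay_power B (max (fst (h 1)) (fst (snd (h 1))))
      else if k = 2 then relay_power B (max (fst (snd (h 2))) (snd (snd (h 2)))) else 0)"

lemma two_slot_admissible:
  assumes B: "B \<ge> 0" and K: "K \<ge> 2"
  shows "admissible K (two_slot_policy B)"
  unfolding admissible_def
proof (intro ballI conjI allI impI)
  fix k and h :: "nat \<Rightarrow> snr"
  show "0 \<le> two_slot_policy B k h" using B by (simp add: two_slot_policy_def relay_power_nonneg)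
next
  fix k and h h' :: "nat \<Rightarrow> snr" assume "\<forall>j\<in>{1..k}. h j = h' j"
  then show "two_slot_policy B k h = two_slot_policy B k h'"
    by (auto simp: two_slot_policy_def)
next
  fix k
  have [measurable]: "(\<lambda>h::nat \<Rightarrow> snr. h i) \<in> measurable (PiM {1..K} (\<lambda>_. borel)) (borel \<Otimes>\<^sub>M (borel \<Otimes>\<^sub>M borel))"
    if "i \<in> {1, 2}" for i
    using that K by (subst borel_snr) (intro measurable_component_singleton, auto)
  show "two_slot_policy B k \<in> borel_measurable (PiM {1..K} (\<lambda>_. borel))"
    unfolding two_slot_policy_def by measurable
qed

text \<open>Feasibility: after slot 1 either the relay or the destination has decoded (the served link
  delivers all B nats); in both cases slot 2 empties the destination's buffer.\<close>
lemma two_slot_feasible: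
  fixes h :: "nat \<Rightarrow> snr"
  assumes B: "B > 0" and K: "K \<ge> 2"
    and h1: "fst (h 1) > 0" "fst (snd (h 1)) > 0" and h2: "fst (snd (h 2)) > 0"
  shows "feasible K B (two_slot_policy B) h"
proof -
  define S where "S n = bstate B (\<lambda>k. two_slot_policy B k h) h n" for n
  define p1 where "p1 = relay_power B (max (fst (h 1)) (fst (snd (h 1))))"
  define p2 where "p2 = relay_power B (max (fst (snd (h 2))) (snd (snd (h 2))))"
  have p1: "p1 \<ge> 0" and p2: "p2 \<ge> 0" using B by (auto simp: p1_def p2_def relay_power_nonneg)
  have S1: "S 1 = (B - ln (1 + p1 * fst (h 1)), B - ln (1 + p1 * fst (snd (h 1))))"
    using B unfolding S_def by (simp add: p1_def two_slot_policy_def Let_def split: prod.split)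
  have S1_le: "snd (S 1) \<le> B" using S1 p1 h1 by simp
  have decoded: "fst (S 1) \<le> 0 \<or> snd (S 1) \<le> 0"
  proof (cases "fst (snd (h 1)) \<le> fst (h 1)")
    case True
    then have "ln (1 + p1 * fst (h 1)) = B" using h1 by (simp add: p1_def relay_power_delivers max_def)
    then show ?thesis using S1 by simp
  next
    case False
    then have "ln (1 + p1 * fst (snd (h 1))) = B" using h1 by (simp add: p1_def relay_power_delivers max_def)
    then show ?thesis using S1 by simp
  qed
  have S2: "S 2 = (if fst (S 1) > 0
      then (fst (S 1) - ln (1 + p2 * fst (h 2)), snd (S 1) - ln (1 + p2 * fst (snd (h 2))))
      else (fst (S 1), snd (S 1) - ln (1 + p2 * max (fst (snd (h 2))) (snd (snd (h 2))))))"
    unfolding S_def numeral_2_eq_2 One_nat_def bstate_Suc_sel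
    by (simp add: Let_def p2_def two_slot_policy_def)
  have "ln (1 + p2 * max (fst (snd (h 2))) (snd (snd (h 2)))) = B"
    using h2 by (simp add: p2_def relay_power_delivers)
  moreover have "0 \<le> ln (1 + p2 * fst (snd (h 2)))" using p2 h2 by simp
  ultimately have S2_le: "snd (S 2) \<le> 0" using S2 decoded S1_le by auto
  have "snd (S K) = snd (S 2)"
    unfolding S_def using K by (intro bstate_silent) (auto simp: two_slot_policy_def)
  then show ?thesis using S2_le unfolding feasible_def S_def by linarith
qed

lemma nn_integral_PiM_component:
  assumes "prob_space D" "i \<in> I" and [measurable]: "f \<in> borel_measurable D"
  shows "(\<integral>\<^sup>+h. f (h i) \<partial>PiM I (\<lambda>_. D)) = (\<integral>\<^sup>+y. f y \<partial>D)"
  using nn_integral_distr[of "\<lambda>h. h i" "PiM I (\<lambda>_. D)" D f] distr_PiM_component[of I "\<lambda>_. D" i] assms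
  by (simp add: measurable_component_singleton)

lemma AE_PiM_component:
  assumes "prob_space D" "i \<in> I" "AE y in D. P y"
  shows "AE h in PiM I (\<lambda>_. D). P (h i)"
proof -
  have marginal: "distr (PiM I (\<lambda>_. D)) D (\<lambda>h. h i) = D"
    using distr_PiM_component[of I "\<lambda>_. D" i] assms(1,2) by simp
  have "AE y in distr (PiM I (\<lambda>_. D)) D (\<lambda>h. h i). P y" unfolding marginal by (rule assms(3))
  then show ?thesis by (rule AE_distrD[OF measurable_component_singleton[OF assms(2)]])
qed

lemma J_star_two_slot_le:
  fixes D :: "snr measure"
  assumes B: "B > 0" and K: "K \<ge> 2" and D_prob: "prob_space D"
    and D_sets: "sets D = sets (borel \<Otimes>\<^sub>M (borel \<Otimes>\<^sub>M borel))"
    and D_pos: "AE y in D. fst (snd y) > 0" and g: "fst g > 0" "fst (snd g) > 0"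
  shows "J_star K B D g \<le> ennreal (relay_power B (max (fst g) (fst (snd g))))
           + (\<integral>\<^sup>+y. ennreal (relay_power B (max (fst (snd y)) (snd (snd y)))) \<partial>D)"
proof -
  interpret D: prob_space D by (rule D_prob)
  define c2 where "c2 y = ennreal (relay_power B (max (fst (snd y)) (snd (snd y))))" for y :: snr
  have c2_measurable: "c2 \<in> borel_measurable D"
    unfolding c2_def using D_sets by (simp cong: measurable_cong_sets)
  have two: "(2::nat) \<in> {2..K}" using K by simp
  have "AE h in PiM {2..K} (\<lambda>_. D). fst (snd (h 2)) > 0"
    using D_prob two D_pos by (rule AE_PiM_component)
  then have feas: "AE h in PiM {2..K} (\<lambda>_. D). feasible K B (two_slot_policy B) (h(1 := g))"
    by eventually_elim (use B K g in \<open>auto intro: two_slot_feasible\<close>)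
  have energy: "(\<Sum>k\<in>{1..K}. ennreal (two_slot_policy B k (h(1 := g))))
      = ennreal (relay_power B (max (fst g) (fst (snd g)))) + c2 (h 2)" for h
  proof -
    have "(\<Sum>k\<in>{1..K}. ennreal (two_slot_policy B k (h(1 := g))))
        = (\<Sum>k\<in>{1, 2}. ennreal (two_slot_policy B k (h(1 := g))))"
      using K by (intro sum.mono_neutral_right) (auto simp: two_slot_policy_def)
    then show ?thesis by (simp add: two_slot_policy_def c2_def)
  qed
  have "J_star K B D g \<le> (\<integral>\<^sup>+h. (\<Sum>k\<in>{1..K}. ennreal (two_slot_policy B k (h(1 := g)))) \<partial>PiM {2..K} (\<lambda>_. D))"
    unfolding J_star_def using two_slot_admissible[of B K] B K feas by (intro INF_lower) auto
  also have "\<dots> = ennreal (relay_power B (max (fst g) (fst (snd g)))) + (\<integral>\<^sup>+h. c2 (h 2) \<partial>PiM {2..K} (\<lambda>_. D))"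
    unfolding energy using measurable_comp[OF measurable_component_singleton[OF two] c2_measurable]
    by (subst nn_integral_add) (auto simp: comp_def prob_space.emeasure_space_1[OF prob_space_PiM] D_prob)
  also have "(\<integral>\<^sup>+h. c2 (h 2) \<partial>PiM {2..K} (\<lambda>_. D)) = (\<integral>\<^sup>+y. c2 y \<partial>D)"
    using D_prob two c2_measurable by (rule nn_integral_PiM_component)
  finally show ?thesis unfolding c2_def .
qed

lemma sets_relay: "sets (relay_law tr gSR gSD gRD) = sets (borel \<Otimes>\<^sub>M (borel \<Otimes>\<^sub>M borel))"
  unfolding relay_law_def by (intro sets_pair_measure_cong) auto

lemma prob_space_relay: "gSR > 0 \<Longrightarrow> gSD > 0 \<Longrightarrow> gRD > 0 \<Longrightarrow> prob_space (relay_law tr gSR gSD gRD)"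
  unfolding relay_law_def by (intro prob_space_pair prob_space_trexp) auto

lemma AE_relay_pos:
  assumes tr: "tr > 0" and gb: "gSR > 0" "gSD > 0" "gRD > 0"
  shows "AE y in relay_law tr gSR gSD gRD. fst y > 0 \<and> fst (snd y) > 0"
proof -
  have sf: "sigma_finite_measure (trexp tr gb)" if "gb > 0" for gb
    using that by (intro prob_space_imp_sigma_finite prob_space_trexp)
  have sf23: "sigma_finite_measure (trexp tr gSD \<Otimes>\<^sub>M trexp tr gRD)"
    using gb by (intro prob_space_imp_sigma_finite prob_space_pair prob_space_trexp)
  have "AE y in relay_law tr gSR gSD gRD. fst y > 0"
    unfolding relay_law_def using sf gb sf23 AE_trexp_pos[OF tr] by (intro AE_pair_fstI) auto
  moreover have "AE w in trexp tr gSD \<Otimes>\<^sub>M trexp tr gRD. fst w > 0"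
    using sf gb AE_trexp_pos[OF tr] by (intro AE_pair_fstI) auto
  then have "AE y in relay_law tr gSR gSD gRD. fst (snd y) > 0"
    unfolding relay_law_def using sf gb sf23 by (intro AE_pair_sndI[where P = "\<lambda>w. fst w > 0"]) auto
  ultimately show ?thesis by eventually_elim auto
qed

text \<open>Decoupling the two SNRs: 1/max x y \<le> x^(-1/2) y^(-1/2).\<close>
lemma relay_power_max_le:
  assumes B: "B > 0"
  shows "ennreal (relay_power B (max x y)) \<le> ennreal (exp B - 1) * (inv_sqrt x * inv_sqrt y)"
proof (cases "x > 0 \<and> y > 0")
  case True
  then have x: "x > 0" and y: "y > 0" by auto
  have "sqrt x * sqrt y \<le> sqrt (max x y) * sqrt (max x y)" using x y by (intro mult_mono) auto
  then have "sqrt x * sqrt y \<le> max x y" using x by simp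
  then have "relay_power B (max x y) \<le> (exp B - 1) * (1 / (sqrt x * sqrt y))"
    using x y B by (simp add: relay_power_def divide_left_mono)
  also have "\<dots> = (exp B - 1) * (x powr (-1/2) * y powr (-1/2))"
    using x y by (simp add: powr_minus_divide powr_half_sqrt)
  also have "ennreal \<dots> = ennreal (exp B - 1) * (inv_sqrt x * inv_sqrt y)"
    using x y B by (simp add: inv_sqrt_def ennreal_mult)
  finally show ?thesis by (simp add: ennreal_leI)
next
  case False
  then have "inv_sqrt x * inv_sqrt y = \<infinity>" by (auto simp: inv_sqrt_def ennreal_mult_eq_top_iff)
  then show ?thesis using B by (simp add: ennreal_mult_top)
qed

lemma relay_slot1_energy_le:
  assumes B: "B > 0" and tr: "tr > 0" and gb: "gSR > 0" "gSD > 0" "gRD > 0"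
  defines "e \<equiv> ennreal (exp B - 1)"
  shows "(\<integral>\<^sup>+g. ennreal (relay_power B (max (fst g) (fst (snd g)))) \<partial>relay_law tr gSR gSD gRD)
           \<le> e * (ennreal (1 + 2/gSR) * ennreal (1 + 2/gSD))"
proof -
  let ?T = "trexp tr"
  have p23: "prob_space (?T gSD \<Otimes>\<^sub>M ?T gRD)" using gb by (intro prob_space_pair prob_space_trexp)
  have "(\<integral>\<^sup>+g. ennreal (relay_power B (max (fst g) (fst (snd g)))) \<partial>relay_law tr gSR gSD gRD)
      \<le> (\<integral>\<^sup>+g. e * (inv_sqrt (fst g) * inv_sqrt (fst (snd g))) \<partial>(?T gSR \<Otimes>\<^sub>M (?T gSD \<Otimes>\<^sub>M ?T gRD)))"
    unfolding relay_law_def e_def using B by (intro nn_integral_mono relay_power_max_le)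
  also have "\<dots> = e * ((\<integral>\<^sup>+x. inv_sqrt x \<partial>?T gSR) * (\<integral>\<^sup>+w. inv_sqrt (fst w) \<partial>(?T gSD \<Otimes>\<^sub>M ?T gRD)))"
    using p23 by (simp add: nn_integral_cmult nn_integral_pair_product[where G = "\<lambda>w. inv_sqrt (fst w)"]
                            prob_space_imp_sigma_finite)
  also have "\<dots> = e * ((\<integral>\<^sup>+x. inv_sqrt x \<partial>?T gSR) * (\<integral>\<^sup>+x. inv_sqrt x \<partial>?T gSD))"
    using prob_space_trexp[of gRD tr] gb by (simp add: nn_integral_pair_fst)
  also have "\<dots> \<le> e * (ennreal (1 + 2/gSR) * ennreal (1 + 2/gSD))"
    using tr gb by (intro mult_left_mono mult_mono trexp_inv_sqrt_moment) auto
  finally show ?thesis .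
qed

lemma relay_slot2_energy_le:
  assumes B: "B > 0" and tr: "tr > 0" and gb: "gSR > 0" "gSD > 0" "gRD > 0"
  defines "e \<equiv> ennreal (exp B - 1)"
  shows "(\<integral>\<^sup>+y. ennreal (relay_power B (max (fst (snd y)) (snd (snd y)))) \<partial>relay_law tr gSR gSD gRD)
           \<le> e * (ennreal (1 + 2/gSD) * ennreal (1 + 2/gRD))"
proof -
  let ?T = "trexp tr"
  have "(\<integral>\<^sup>+y. ennreal (relay_power B (max (fst (snd y)) (snd (snd y)))) \<partial>relay_law tr gSR gSD gRD)
      \<le> (\<integral>\<^sup>+y. e * (inv_sqrt (fst (snd y)) * inv_sqrt (snd (snd y))) \<partial>(?T gSR \<Otimes>\<^sub>M (?T gSD \<Otimes>\<^sub>M ?T gRD)))"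
    unfolding relay_law_def e_def using B by (intro nn_integral_mono relay_power_max_le)
  also have "\<dots> = (\<integral>\<^sup>+w. e * (inv_sqrt (fst w) * inv_sqrt (snd w)) \<partial>(?T gSD \<Otimes>\<^sub>M ?T gRD))"
    using gb
    by (intro nn_integral_pair_snd[where G = "\<lambda>w. e * (inv_sqrt (fst w) * inv_sqrt (snd w))"]
          prob_space_imp_sigma_finite prob_space_pair prob_space_trexp) auto
  also have "\<dots> = e * ((\<integral>\<^sup>+x. inv_sqrt x \<partial>?T gSD) * (\<integral>\<^sup>+x. inv_sqrt x \<partial>?T gRD))"
    using prob_space_trexp[of gRD tr] gb
    by (simp add: nn_integral_cmult nn_integral_pair_product prob_space_imp_sigma_finite)
  also have "\<dots> \<le> e * (ennreal (1 + 2/gSD) * ennreal (1 + 2/gRD))"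
    using tr gb by (intro mult_left_mono mult_mono trexp_inv_sqrt_moment) auto
  finally show ?thesis .
qed

lemma nmese_relay_le:
  assumes Reff: "Reff > 0" and K: "K \<ge> 2" and tr: "tr > 0" and gb: "gSR > 0" "gSD > 0" "gRD > 0"
  defines "e \<equiv> ennreal (exp (real K * Reff) - 1)"
  shows "nmese K Reff (relay_law tr gSR gSD gRD)
     \<le> ennreal (1 / real K) * (e * (ennreal (1 + 2/gSR) * ennreal (1 + 2/gSD))
                                + e * (ennreal (1 + 2/gSD) * ennreal (1 + 2/gRD)))"
proof -
  define B where "B = real K * Reff"
  define D where "D = relay_law tr gSR gSD gRD"
  have B: "B > 0" using K Reff by (simp add: B_def)
  interpret D: prob_space D unfolding D_def using gb by (rule prob_space_relay)
  have D_sets: "sets D = sets (borel \<Otimes>\<^sub>M (borel \<Otimes>\<^sub>M borel))" unfolding D_def by (rule sets_relay)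
  have D_pos: "AE y in D. fst y > 0 \<and> fst (snd y) > 0" unfolding D_def using tr gb by (rule AE_relay_pos)
  define C2 where "C2 = (\<integral>\<^sup>+y. ennreal (relay_power B (max (fst (snd y)) (snd (snd y)))) \<partial>D)"
  have "(\<integral>\<^sup>+g. J_star K B D g \<partial>D) \<le> (\<integral>\<^sup>+g. ennreal (relay_power B (max (fst g) (fst (snd g)))) + C2 \<partial>D)"
  proof (rule nn_integral_mono_AE)
    have D_pos_SD: "AE y in D. fst (snd y) > 0" using D_pos by eventually_elim auto
    show "AE g in D. J_star K B D g \<le> ennreal (relay_power B (max (fst g) (fst (snd g)))) + C2"
      using D_pos
    proof eventually_elim
      case (elim g)
      then show ?case
        using J_star_two_slot_le[OF B K D.prob_space_axioms D_sets D_pos_SD] by (simp add: C2_def)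
    qed
  qed
  also have "\<dots> = (\<integral>\<^sup>+g. ennreal (relay_power B (max (fst g) (fst (snd g)))) \<partial>D) + C2"
    using D_sets by (subst nn_integral_add) (auto simp: D.emeasure_space_1 cong: measurable_cong_sets)
  also have "\<dots> \<le> e * (ennreal (1 + 2/gSR) * ennreal (1 + 2/gSD)) + e * (ennreal (1 + 2/gSD) * ennreal (1 + 2/gRD))"
    unfolding C2_def D_def e_def B_def[symmetric] using B tr gb by (intro add_mono relay_slot1_energy_le relay_slot2_energy_le)
  finally show ?thesis
    unfolding nmese_def D_def[symmetric] B_def[symmetric] by (intro mult_left_mono) auto
qed

lemma nmese_relay_bounded:
  assumes Reff: "Reff > 0" and gb: "gSR > 0" "gSD > 0" "gRD > 0" and K: "K \<ge> 2"
  shows "Limsup (at_right 0) (\<lambda>tr. nmese K Reff (relay_law tr gSR gSD gRD)) < \<infinity>"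
proof -
  define e where "e = ennreal (exp (real K * Reff) - 1)"
  define C where "C = ennreal (1 / real K) * (e * (ennreal (1 + 2/gSR) * ennreal (1 + 2/gSD))
                                           + e * (ennreal (1 + 2/gSD) * ennreal (1 + 2/gRD)))"
  have "Limsup (at_right 0) (\<lambda>tr. nmese K Reff (relay_law tr gSR gSD gRD)) \<le> C"
    using eventually_at_right_less[of "0::real"] nmese_relay_le[OF Reff K _ gb]
    unfolding C_def e_def by (intro Limsup_bounded) (auto elim: eventually_mono)
  also have "C < \<infinity>" unfolding C_def e_def by (simp add: ennreal_mult_less_top)
  finally show ?thesis .
qed


theorem theorem3:
  fixes Reff gSR gSD gRD :: real
  assumes "Reff > 0" and "gSR > 0" and "gSD > 0" and "gRD > 0"
  shows "(\<forall>K::nat. K \<ge> 1 \<longrightarrow>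
            ((\<lambda>tr. nmese K Reff (norelay_law tr gSD gRD)) \<longlongrightarrow> \<infinity>) (at_right 0))
       \<and> (\<forall>K::nat. K \<ge> 2 \<longrightarrow>
            Limsup (at_right 0) (\<lambda>tr. nmese K Reff (relay_law tr gSR gSD gRD)) < \<infinity>)"
  using nmese_norelay_tendsto[OF assms(1,3,4)] nmese_relay_bounded[OF assms] by blast

end
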